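(* Consider the partially replicated key-value store running the client and server algorithms described in the context. Let $K'$ be a version of key $k'$ created by operation PUT$(k',K')$ and $K$ a version of key $k$ created by PUT$(k,K)$, and suppose PUT$(k',K') \rightarrow$ PUT$(k,K)$ (so $K$ dep $K'$). Let $u_{K'},u_K$ denote the corresponding update messages, with timestamps $u_{K'}.ut, u_K.ut$. Then $u_{K'}.ut < u_K.ut$ and $K'.ut < K.ut$.
   Context: System: servers $1,\dots,n$ and clients; each client $c$ can send requests to a fixed set $S_c$ of servers. Server $i$ stores a set of keys $\mathcal{K}_i$ in a multi-version store; a version is a tuple $K=\langle k,v,ut\rangle$ (key, value, timestamp $K.ut$). Servers communicate over reliable FIFO point-to-point channels; each server $i$ has a physical clock $Clock_i$ that increases over time. Client $c$ keeps scalars $PT_c,GT_c$ (initially $0$) and a vector $LST_c$ indexed by $S_c$ (initially $0$). Client PUT$(k,v)$ at server $i$: send $(k,v,\max(PT_c,GT_c))$ to $i$, receive a timestamp $t$, set $PT_c\leftarrow\max(PT_c,t)$. Client GET$(k)$ at server $i$: compute $rd=\min_{j\in S_c,j\ne i}LST_c(j)$, send $(k,PT_c,rd,S_c)$, receive $(v,t,\{lst_j\})$, set $GT_c\leftarrow\max(GT_c,t)$ and $LST_c(j)\leftarrow\max(LST_c(j),lst_j)$ for all $j\in S_c$, return $v$. Server $i$ on a PUT request $(k,v,t)$: wait until $t<Clock_i$; create version $K$ with $K.k=k$, $K.v=v$, $K.ut=Clock_i$; insert it locally; send an update message $u_K=K$ to every server storing $k$; reply $K.ut$ to the client. On a GET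 request $(k,t,rd,g)$: (possibly wait, and) return the value $K.v$ and timestamp $K.ut$ of some locally stored version $K$ of $k$ (together with some auxiliary values). On receiving an update $u$ from server $j$: insert $u$ into local storage. Happens-before: for operations (PUT or GET) $e,f$, $e\rightarrow f$ iff (1) $e,f$ are by the same client and $e$ occurs earlier, or (2) $e$ is PUT$(k,v)$ and $f$ is a GET$(k)$ returning the value written by $e$, or (3) there is $g$ with $e\rightarrow g$ and $g\rightarrow f$. Version $K$ of $k$ causally depends on version $K'$ of $k'$ ($K$ dep $K'$) iff PUT$(k',K')\rightarrow$ PUT$(k,K)$. *)

theory Defs
  imports Main
begin

datatype ('k, 'v) version = Version (vkey: 'k) (vval: 'v) (vut: nat)

definition upd_msg :: "('k, 'v) version \<Rightarrow> ('k, 'v) version" where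
  "upd_msg K = K"

(* Global state: server clocks, multi-version stores, FIFO channels (chan j i = messages
   in transit from server j to server i), client variables PT, GT, LST. *)
record ('c, 'k, 'v) gstate =
  clk   :: "nat \<Rightarrow> nat"
  store :: "nat \<Rightarrow> ('k, 'v) version set"
  chan  :: "nat \<Rightarrow> nat \<Rightarrow> ('k, 'v) version list"
  PT    :: "'c \<Rightarrow> nat"
  GT    :: "'c \<Rightarrow> nat"
  LST   :: "'c \<Rightarrow> nat \<Rightarrow> nat"

(* Events: a client operation (request + reply, the client is blocked meanwhile),
   delivery of an update message from server j to server i, and a clock advance. *)
datatype ('c, 'k, 'v) event =
    EPut 'c nat "('k, 'v) version"
  | EGet 'c nat "('k, 'v) version"
  | EDeliver nat nat                    (* from server j to server i *)
  | ETick nat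

(* n servers 1..n; S c = servers client c may contact; Keys i = keys stored at server i *)
inductive step ::
  "nat \<Rightarrow> ('c \<Rightarrow> nat set) \<Rightarrow> (nat \<Rightarrow> 'k set) \<Rightarrow>
   ('c, 'k, 'v) gstate \<Rightarrow> ('c, 'k, 'v) event \<Rightarrow> ('c, 'k, 'v) gstate \<Rightarrow> bool"
  for n S Keys where
  put: "\<lbrakk> i \<in> S c; i \<in> {1..n}; k \<in> Keys i;
          max (PT s c) (GT s c) < clk s i;
          K = Version k v (clk s i) \<rbrakk> \<Longrightarrow>
        step n S Keys s (EPut c i K)
          (s\<lparr> store := (store s)(i := insert K (store s i)),
              chan := (\<lambda>j' i'. if j' = i \<and> i' \<in> {1..n} \<and> i' \<noteq> i \<and> k \<in> Keys i'
                               then chan s j' i' @ [upd_msg K] else chan s j' i'),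
              PT := (PT s)(c := max (PT s c) (vut K)) \<rparr>)"
| get: "\<lbrakk> i \<in> S c; i \<in> {1..n}; k \<in> Keys i; K \<in> store s i; vkey K = k \<rbrakk> \<Longrightarrow>
        step n S Keys s (EGet c i K)
          (s\<lparr> GT := (GT s)(c := max (GT s c) (vut K)),
              LST := (LST s)(c := (\<lambda>j. if j \<in> S c then max (LST s c j) (lsts j)
                                         else LST s c j)) \<rparr>)"
| deliver: "chan s j i = u # rest \<Longrightarrow>
        step n S Keys s (EDeliver j i)
          (s\<lparr> store := (store s)(i := insert u (store s i)),
              chan := (chan s)(j := (chan s j)(i := rest)) \<rparr>)"
| tick: "clk s i < t \<Longrightarrow>
        step n S Keys s (ETick i) (s\<lparr> clk := (clk s)(i := t) \<rparr>)"

inductive steps ::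
  "nat \<Rightarrow> ('c \<Rightarrow> nat set) \<Rightarrow> (nat \<Rightarrow> 'k set) \<Rightarrow>
   ('c, 'k, 'v) gstate \<Rightarrow> ('c, 'k, 'v) event list \<Rightarrow> ('c, 'k, 'v) gstate \<Rightarrow> bool"
  for n S Keys where
  nil: "steps n S Keys s [] s"
| snoc: "steps n S Keys s tr s' \<Longrightarrow> step n S Keys s' e s'' \<Longrightarrow> steps n S Keys s (tr @ [e]) s''"

definition init :: "('c, 'k, 'v) gstate \<Rightarrow> bool" where
  "init s \<longleftrightarrow> (\<forall>j i. chan s j i = []) \<and> (\<forall>c. PT s c = 0 \<and> GT s c = 0)
             \<and> (\<forall>c j. LST s c j = 0)"

definition execution ::
  "nat \<Rightarrow> ('c \<Rightarrow> nat set) \<Rightarrow> (nat \<Rightarrow> 'k set) \<Rightarrow> ('c, 'k, 'v) event list \<Rightarrow> bool" where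
  "execution n S Keys tr \<longleftrightarrow> (\<exists>s0 s. init s0 \<and> steps n S Keys s0 tr s)"

fun op_client :: "('c, 'k, 'v) event \<Rightarrow> 'c option" where
  "op_client (EPut c _ _) = Some c"
| "op_client (EGet c _ _) = Some c"
| "op_client _ = None"

(* happens-before between operations, identified by their positions in the trace *)
inductive hb :: "('c, 'k, 'v) event list \<Rightarrow> nat \<Rightarrow> nat \<Rightarrow> bool" for tr where
  same_client: "\<lbrakk> a < b; b < length tr; op_client (tr ! a) = Some c;
                  op_client (tr ! b) = Some c \<rbrakk> \<Longrightarrow> hb tr a b"
| reads_from: "\<lbrakk> a < length tr; b < length tr; tr ! a = EPut c i K;
                 tr ! b = EGet c' j K \<rbrakk> \<Longrightarrow> hb tr a b"
| trans: "hb tr a b \<Longrightarrow> hb tr b d \<Longrightarrow> hb tr a d"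

end

theory Submission
  imports Defs
begin

(* Every operation of client c leaves max (PT c) (GT c) at least as large as the timestamp
   it handled, this value never decreases, and a PUT of c gets a timestamp strictly above
   it.  Hence along every happens-before edge the timestamp of the earlier operation stays
   below the current client value, and becomes strictly smaller than the timestamp of any
   later PUT. *)

lemma steps_imp_state_sequence:
  assumes "steps n S Keys s tr s'"
  shows "\<exists>st. st 0 = s \<and> st (length tr) = s' \<and>
           (\<forall>p<length tr. step n S Keys (st p) (tr ! p) (st (Suc p)))"
  using assms
proof (induction rule: steps.induct)
  case (nil s)
  show ?case by (intro exI[of _ "\<lambda>_. s"]) simp
next
  case (snoc s tr s' e s'')
  then obtain st where st: "st 0 = s" "st (length tr) = s'"
    "\<forall>p<length tr. step n S Keys (st p) (tr ! p) (st (Suc p))" by blast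
  let ?st = "st(Suc (length tr) := s'')"
  have "step n S Keys (?st p) ((tr @ [e]) ! p) (?st (Suc p))" if "p < length (tr @ [e])" for p
  proof (cases "p < length tr")
    case True
    then show ?thesis using st(3) by (simp add: nth_append)
  next
    case False
    with that have "p = length tr" by simp
    then show ?thesis using st(2) snoc.hyps(2) by simp
  qed
  then show ?case using st by (intro exI[of _ ?st]) simp
qed

lemma step_mono_PT_GT:
  assumes "step n S Keys s e s'"
  shows "PT s c \<le> PT s' c \<and> GT s c \<le> GT s' c"
  using assms by (cases rule: step.cases) auto

fun op_version :: "('c, 'k, 'v) event \<Rightarrow> ('k, 'v) version" where
  "op_version (EPut _ _ K) = K"
| "op_version (EGet _ _ K) = K"
| "op_version _ = undefined"

locale run =
  fixes n :: nat and S :: "'c \<Rightarrow> nat set" and Keys :: "nat \<Rightarrow> 'k set"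
    and tr :: "('c, 'k, 'v) event list" and st :: "nat \<Rightarrow> ('c, 'k, 'v) gstate"
  assumes run_step: "p < length tr \<Longrightarrow> step n S Keys (st p) (tr ! p) (st (Suc p))"
begin

definition client_clock :: "'c \<Rightarrow> nat \<Rightarrow> nat" where
  "client_clock c p = max (PT (st p) c) (GT (st p) c)"

lemma client_clock_mono:
  assumes "p \<le> q" "q \<le> length tr"
  shows "client_clock c p \<le> client_clock c q"
  using assms
proof (induction q rule: dec_induct)
  case (step q)
  have "q < length tr" using step.hyps(2) step.prems by simp
  then have "client_clock c q \<le> client_clock c (Suc q)"
    using step_mono_PT_GT[OF run_step] unfolding client_clock_def by (meson max.mono)
  then show ?case using step by simp
qed simp

lemma op_version_le_client_clock:
  assumes "p < length tr" "op_client (tr ! p) = Some c"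
  shows "vut (op_version (tr ! p)) \<le> client_clock c (Suc p)"
  using run_step[OF assms(1)] assms(2) unfolding client_clock_def
  by (cases rule: step.cases) auto

lemma client_clock_less_put:
  assumes "p < length tr" "tr ! p = EPut c i K"
  shows "client_clock c p < vut K"
  using run_step[OF assms(1)] assms(2) unfolding client_clock_def
  by (cases rule: step.cases) auto

(* The PUT conjunct is what lets a bound pass to a GET that reads the version of b: the
   GET may occur before b in the trace, since initial stores are arbitrary. *)
definition covers :: "nat \<Rightarrow> nat \<Rightarrow> bool" where
  "covers b t \<longleftrightarrow> b < length tr
     \<and> (\<exists>c. op_client (tr ! b) = Some c \<and> t \<le> client_clock c (Suc b))
     \<and> (\<forall>c i K. tr ! b = EPut c i K \<longrightarrow> t \<le> vut K)"

lemma covers_put_version: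
  assumes "a < length tr" "tr ! a = EPut c i K"
  shows "covers a (vut K)"
  using op_version_le_client_clock[OF assms(1)] assms unfolding covers_def by simp

lemma covers_same_client:
  assumes "covers b t" "b < d" "d < length tr"
    and "op_client (tr ! b) = Some c" "op_client (tr ! d) = Some c"
  shows "covers d t \<and> (\<forall>c i K. tr ! d = EPut c i K \<longrightarrow> t < vut K)"
proof -
  have "t \<le> client_clock c (Suc b)" using assms(1,4) unfolding covers_def by auto
  also have "\<dots> \<le> client_clock c d" using assms(2,3) by (simp add: client_clock_mono)
  finally have t_le: "t \<le> client_clock c d" .
  have "t \<le> client_clock c (Suc d)"
    using t_le client_clock_mono[of d "Suc d" c] assms(3) by simp
  moreover have "t < vut K" if "tr ! d = EPut c' i K" for c' i K
    using t_le client_clock_less_put[OF assms(3) that] that assms(5) by simp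
  ultimately show ?thesis using assms(3,5) unfolding covers_def by auto
qed

lemma covers_reads_from:
  assumes "covers b t" "d < length tr" "tr ! b = EPut c i K" "tr ! d = EGet c' j K"
  shows "covers d t \<and> (\<forall>c i K. tr ! d = EPut c i K \<longrightarrow> t < vut K)"
proof -
  have "t \<le> vut K" using assms(1,3) unfolding covers_def by simp
  also have "\<dots> \<le> client_clock c' (Suc d)"
    using op_version_le_client_clock[OF assms(2)] assms(4) by simp
  finally show ?thesis using assms(2,4) unfolding covers_def by simp
qed

lemma covers_hb:
  assumes "hb tr b d" "covers b t"
  shows "covers d t \<and> (\<forall>c i K. tr ! d = EPut c i K \<longrightarrow> t < vut K)"
  using assms
proof (induction arbitrary: t rule: hb.induct)
  case (same_client b d c)
  then show ?case using covers_same_client by blast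
next
  case (reads_from b d c i K c' j)
  then show ?case using covers_reads_from by blast
next
  case (trans b x d)
  then show ?case by blast
qed

end

theorem lemma5p1:
  fixes n :: nat and S :: "'c \<Rightarrow> nat set" and Keys :: "nat \<Rightarrow> 'k set"
    and tr :: "('c, 'k, 'v) event list"
  assumes "execution n S Keys tr"
    and "a < length tr" and "b < length tr"
    and "tr ! a = EPut c' i' K'" and "tr ! b = EPut c i K"
    and "hb tr a b"
  shows "vut (upd_msg K') < vut (upd_msg K) \<and> vut K' < vut K"
proof -
  obtain s0 s where "steps n S Keys s0 tr s"
    using assms(1) unfolding execution_def by blast
  then obtain st where "\<forall>p<length tr. step n S Keys (st p) (tr ! p) (st (Suc p))"
    using steps_imp_state_sequence by blast
  then interpret run n S Keys tr st by unfold_locales simp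
  have "vut K' < vut K"
    using covers_hb[OF assms(6) covers_put_version[OF assms(2,4)]] assms(5) by blast
  then show ?thesis by (simp add: upd_msg_def)
qed

end
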